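(* Let $E$ be a topological space, let $\Omega\subseteq E$ be a non-empty relatively compact open set with $\partial\Omega\neq\emptyset$, and let $Y$ be a real locally convex Hausdorff topological vector space. For any continuous function $f:\overline{\Omega}\to Y$, the following are equivalent: (b1) $f$ satisfies the convex hull property in $\overline{\Omega}$, i.e. $f(\Omega)\subseteq\overline{\mathrm{conv}}(f(\partial\Omega))$; (b2) for every continuous and quasi-convex function $\psi:Y\to\mathbf{R}$, one has $\sup_{x\in\Omega}\psi(f(x))=\sup_{x\in\partial\Omega}\psi(f(x))$.
   Context: $\overline{\Omega}$ and $\partial\Omega$ are the closure and boundary of $\Omega$ in $E$; $\overline{\mathrm{conv}}(S)$ is the closed convex hull of $S$. A function $\psi:Y\to\mathbf{R}$ is quasi-convex if for each $r\in\mathbf{R}$ the set $\psi^{-1}(]-\infty,r])$ is convex. *)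

theory Defs
  imports "HOL-Analysis.Analysis"
begin

definition quasi_convex :: "('a::real_vector \<Rightarrow> real) \<Rightarrow> bool" where
  "quasi_convex \<psi> \<longleftrightarrow> (\<forall>r. convex {y. \<psi> y \<le> r})"

text \<open>A real locally convex topological vector space structure on a type:
  vector operations are jointly continuous and 0 has a neighbourhood base of
  convex open sets. (Hausdorffness is imposed via the class t2_space.)\<close>
definition locally_convex_tvs :: "'a::{real_vector,topological_space} itself \<Rightarrow> bool" where
  "locally_convex_tvs _ \<longleftrightarrow>
     continuous_on UNIV (\<lambda>p::'a \<times> 'a. fst p + snd p) \<and>
     continuous_on UNIV (\<lambda>p::real \<times> 'a. fst p *\<^sub>R snd p) \<and>
     (\<forall>U::'a set. open U \<and> 0 \<in> U \<longrightarrow> (\<exists>V. open V \<and> convex V \<and> 0 \<in> V \<and> V \<subseteq> U))"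

end

theory Submission
  imports Defs
begin

text \<open>If \<open>f(\<Omega>)\<close> lies in the closed convex hull \<open>C\<close> of \<open>f(\<partial>\<Omega>)\<close>, then for continuous quasi-convex
  \<open>\<psi>\<close> the sublevel set of \<open>\<psi>\<close> at height \<open>sup\<^sub>\<partial>\<^sub>\<Omega> \<psi> \<circ> f\<close> is closed and convex, so it contains \<open>C\<close>
  and hence \<open>f(\<Omega>)\<close>; the reverse inequality holds because \<open>\<partial>\<Omega> \<subseteq> closure \<Omega>\<close>.
  Conversely, a value \<open>f(x\<^sub>0)\<close> outside \<open>C\<close> is separated from \<open>C\<close> by a quasi-convex function: if \<open>W\<close>
  is a convex open neighbourhood of \<open>0\<close> with \<open>(f(x\<^sub>0) - W) \<inter> C = {}\<close>, the Minkowski functional of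
  the open convex set \<open>conv(f(\<partial>\<Omega>)) + W\<close> (recentred at a boundary value) is continuous, quasi-convex,
  \<open>< 1\<close> on \<open>f(\<partial>\<Omega>)\<close> and \<open>\<ge> 1\<close> at \<open>f(x\<^sub>0)\<close>. Since \<open>\<partial>\<Omega>\<close> is compact, its supremum over the
  boundary stays below \<open>1\<close>, contradicting (b2).\<close>

lemma lctvs_continuous_on_affine:
  assumes "locally_convex_tvs TYPE('y::{real_vector,topological_space})"
  shows "continuous_on UNIV (\<lambda>x::'y. a *\<^sub>R x + b)"
proof -
  have add: "continuous_on UNIV (\<lambda>p::'y \<times> 'y. fst p + snd p)"
    and scale: "continuous_on UNIV (\<lambda>p::real \<times> 'y. fst p *\<^sub>R snd p)"
    using assms unfolding locally_convex_tvs_def by auto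
  have "continuous_on UNIV (\<lambda>x::'y. fst (a, x) *\<^sub>R snd (a, x))"
    by (rule continuous_on_compose2[OF scale]) (auto intro!: continuous_intros)
  then have "continuous_on UNIV (\<lambda>x::'y. fst (a *\<^sub>R x, b) + snd (a *\<^sub>R x, b))"
    by (intro continuous_on_compose2[OF add]) (auto intro!: continuous_intros)
  then show ?thesis by simp
qed

lemma lctvs_open_affine_preimage:
  assumes "locally_convex_tvs TYPE('y::{real_vector,topological_space})" and "open (D::'y set)"
  shows "open {x. a *\<^sub>R x + b \<in> D}"
  using open_vimage[OF assms(2) lctvs_continuous_on_affine[OF assms(1)]] by (simp add: vimage_def)

lemma lctvs_open_ray_preimage:
  assumes "locally_convex_tvs TYPE('y::{real_vector,topological_space})" and "open (D::'y set)"
  shows "open {s::real. s *\<^sub>R z \<in> D}"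
proof -
  have "continuous_on UNIV (\<lambda>p::real \<times> 'y. fst p *\<^sub>R snd p)"
    using assms(1) unfolding locally_convex_tvs_def by auto
  then have "continuous_on UNIV (\<lambda>s::real. fst (s, z) *\<^sub>R snd (s, z))"
    by (rule continuous_on_compose2) (auto intro!: continuous_intros)
  then show ?thesis
    using open_vimage[OF assms(2)] by (simp add: vimage_def)
qed

lemma lctvs_open_set_plus:
  assumes "locally_convex_tvs TYPE('y::{real_vector,topological_space})" and "open (W::'y set)"
  shows "open (K + W)"
proof -
  have "K + W = (\<Union>k\<in>K. {z. 1 *\<^sub>R z + - k \<in> W})"
    by (auto simp: set_plus_def) (metis add.commute diff_add_cancel)
  then show ?thesis
    using lctvs_open_affine_preimage[OF assms] open_UN by metis
qed

lemma quasi_convex_translate: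
  assumes "quasi_convex \<psi>"
  shows "quasi_convex (\<lambda>y. \<psi> (y - c))"
  unfolding quasi_convex_def
proof
  fix r
  have "{y. \<psi> (y - c) \<le> r} = (+) c ` {z. \<psi> z \<le> r}"
    by (auto simp: image_iff algebra_simps) (metis diff_add_cancel)
  then show "convex {y. \<psi> (y - c) \<le> r}"
    using assms convex_translation unfolding quasi_convex_def by metis
qed

definition minkowski_functional :: "'a::real_vector set \<Rightarrow> 'a \<Rightarrow> real" where
  "minkowski_functional D z = Inf {t. 0 < t \<and> inverse t *\<^sub>R z \<in> D}"

locale lctvs_convex_open_nbhd =
  fixes D :: "'y::{real_vector,topological_space} set"
  assumes lctvs: "locally_convex_tvs TYPE('y)"
    and open_D: "open D" and convex_D: "convex D" and zero_in_D: "0 \<in> D"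
begin

lemma scaling_set_nonempty: "{t. 0 < t \<and> inverse t *\<^sub>R z \<in> D} \<noteq> {}"
proof -
  have "0 \<in> {s::real. s *\<^sub>R z \<in> D}" using zero_in_D by simp
  then obtain e where e: "e > 0" "ball 0 e \<subseteq> {s::real. s *\<^sub>R z \<in> D}"
    by (rule openE[OF lctvs_open_ray_preimage[OF lctvs open_D]])
  moreover have "e/2 \<in> ball 0 e" using e(1) by simp
  ultimately have "(e/2) *\<^sub>R z \<in> D" by blast
  then have "inverse (e/2) \<in> {t. 0 < t \<and> inverse t *\<^sub>R z \<in> D}" using e(1) by simp
  then show ?thesis by blast
qed

lemma scaling_set_bdd_below: "bdd_below {t. 0 < t \<and> inverse t *\<^sub>R z \<in> D}"
  by (rule bdd_belowI[of _ 0]) auto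

lemma scaling_mono:
  assumes "0 < t" "t \<le> s" "inverse t *\<^sub>R z \<in> D"
  shows "inverse s *\<^sub>R z \<in> D"
proof -
  have "(t/s) *\<^sub>R (inverse t *\<^sub>R z) + (1 - t/s) *\<^sub>R 0 \<in> D"
    using assms zero_in_D by (intro convexD[OF convex_D]) auto
  moreover have "(t/s) *\<^sub>R (inverse t *\<^sub>R z) = inverse s *\<^sub>R z"
    using assms by (auto simp: inverse_eq_divide)
  ultimately show ?thesis by (metis add.right_neutral scaleR_zero_right)
qed

lemma minkowski_functional_less_imp:
  assumes "minkowski_functional D z < s"
  shows "inverse s *\<^sub>R z \<in> D" and "0 < s"
proof -
  obtain t where t: "0 < t" "inverse t *\<^sub>R z \<in> D" "t < s"
    using assms cInf_less_iff[OF scaling_set_nonempty scaling_set_bdd_below]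
    unfolding minkowski_functional_def by auto
  then show "inverse s *\<^sub>R z \<in> D" using scaling_mono by auto
  show "0 < s" using t by auto
qed

lemma minkowski_functional_le:
  assumes "0 < s" "inverse s *\<^sub>R z \<in> D"
  shows "minkowski_functional D z \<le> s"
  unfolding minkowski_functional_def using assms by (intro cInf_lower[OF _ scaling_set_bdd_below]) auto

lemma minkowski_functional_less_one:
  assumes "z \<in> D"
  shows "minkowski_functional D z < 1"
proof -
  have "1 \<in> {s::real. s *\<^sub>R z \<in> D}" using assms by simp
  then obtain e where e: "e > 0" "ball 1 e \<subseteq> {s::real. s *\<^sub>R z \<in> D}"
    by (rule openE[OF lctvs_open_ray_preimage[OF lctvs open_D]])
  moreover have "1 + e/2 \<in> ball 1 e" using e(1) by (simp add: dist_real_def)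
  ultimately have "(1 + e/2) *\<^sub>R z \<in> D" by blast
  then have "minkowski_functional D z \<le> inverse (1 + e/2)"
    using e(1) by (intro minkowski_functional_le) auto
  also have "\<dots> < 1" using e(1) by (simp add: field_simps)
  finally show ?thesis .
qed

lemma minkowski_functional_ge_one:
  assumes "z \<notin> D"
  shows "1 \<le> minkowski_functional D z"
  using minkowski_functional_less_imp(1)[of z 1] assms by (cases "minkowski_functional D z < 1") auto

lemma minkowski_functional_subadditive:
  "minkowski_functional D (a + b) \<le> minkowski_functional D a + minkowski_functional D b"
proof (rule field_le_epsilon)
  fix e :: real assume e: "0 < e"
  define s where "s = minkowski_functional D a + e/2"
  define t where "t = minkowski_functional D b + e/2"
  have s: "0 < s" "inverse s *\<^sub>R a \<in> D"
    using minkowski_functional_less_imp[of a s] e unfolding s_def by auto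
  have t: "0 < t" "inverse t *\<^sub>R b \<in> D"
    using minkowski_functional_less_imp[of b t] e unfolding t_def by auto
  have "(s/(s+t)) *\<^sub>R (inverse s *\<^sub>R a) + (t/(s+t)) *\<^sub>R (inverse t *\<^sub>R b) \<in> D"
    using s t by (intro convexD[OF convex_D]) (auto simp: add_divide_distrib[symmetric])
  moreover have "(s/(s+t)) *\<^sub>R (inverse s *\<^sub>R a) + (t/(s+t)) *\<^sub>R (inverse t *\<^sub>R b)
      = inverse (s+t) *\<^sub>R (a + b)"
    using s t by (simp add: field_simps scaleR_add_right)
  ultimately have "minkowski_functional D (a + b) \<le> s + t"
    using s t by (intro minkowski_functional_le) auto
  then show "minkowski_functional D (a + b) \<le> minkowski_functional D a + minkowski_functional D b + e"
    unfolding s_def t_def by simp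
qed

lemma quasi_convex_minkowski_functional: "quasi_convex (minkowski_functional D)"
  unfolding quasi_convex_def
proof (intro allI convexI)
  fix r :: real and x y :: 'y and u v :: real
  assume x: "x \<in> {y. minkowski_functional D y \<le> r}" and y: "y \<in> {y. minkowski_functional D y \<le> r}"
    and uv: "0 \<le> u" "0 \<le> v" "u + v = 1"
  have "minkowski_functional D (u *\<^sub>R x + v *\<^sub>R y) \<le> s" if "s > r" for s
  proof -
    have "inverse s *\<^sub>R x \<in> D" "0 < s"
      using minkowski_functional_less_imp[of x s] x \<open>s > r\<close> by auto
    moreover have "inverse s *\<^sub>R y \<in> D"
      using minkowski_functional_less_imp[of y s] y \<open>s > r\<close> by auto
    ultimately have "u *\<^sub>R (inverse s *\<^sub>R x) + v *\<^sub>R (inverse s *\<^sub>R y) \<in> D"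
      using uv by (intro convexD[OF convex_D]) auto
    then have "inverse s *\<^sub>R (u *\<^sub>R x + v *\<^sub>R y) \<in> D"
      by (simp add: scaleR_add_right mult.commute)
    then show ?thesis using \<open>0 < s\<close> by (intro minkowski_functional_le)
  qed
  then show "u *\<^sub>R x + v *\<^sub>R y \<in> {y. minkowski_functional D y \<le> r}"
    by (auto intro: dense_ge)
qed

lemma eventually_minkowski_functional_less:
  assumes "minkowski_functional D z < a"
  shows "eventually (\<lambda>x. minkowski_functional D x < a) (nhds z)"
proof -
  obtain t where t: "minkowski_functional D z < t" "t < a"
    using assms dense by blast
  define V where "V = {x. inverse t *\<^sub>R x + 0 \<in> D}"
  have "open V"
    unfolding V_def by (rule lctvs_open_affine_preimage[OF lctvs open_D])
  moreover have "z \<in> V"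
    unfolding V_def using minkowski_functional_less_imp(1)[OF t(1)] by simp
  moreover have "minkowski_functional D x < a" if "x \<in> V" for x
    using that minkowski_functional_le[of t x] minkowski_functional_less_imp(2)[OF t(1)] t(2)
    unfolding V_def by simp
  ultimately show ?thesis
    unfolding eventually_nhds by blast
qed

lemma eventually_minkowski_functional_greater:
  assumes "a < minkowski_functional D z"
  shows "eventually (\<lambda>x. a < minkowski_functional D x) (nhds z)"
proof -
  define d where "d = (minkowski_functional D z - a)/2"
  have d: "0 < d" using assms unfolding d_def by simp
  define V where "V = {x. (- inverse d) *\<^sub>R x + inverse d *\<^sub>R z \<in> D}"
  have "open V"
    unfolding V_def by (rule lctvs_open_affine_preimage[OF lctvs open_D])
  moreover have "z \<in> V"
    unfolding V_def using zero_in_D by simp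
  moreover have "a < minkowski_functional D x" if "x \<in> V" for x
  proof -
    have "inverse d *\<^sub>R (z - x) \<in> D"
      using that unfolding V_def by (simp add: scaleR_diff_right)
    then have "minkowski_functional D (z - x) \<le> d"
      using d by (intro minkowski_functional_le)
    moreover have "minkowski_functional D z \<le> minkowski_functional D x + minkowski_functional D (z - x)"
      using minkowski_functional_subadditive[of x "z - x"] by simp
    ultimately have "minkowski_functional D z - d \<le> minkowski_functional D x"
      by linarith
    moreover have "a < minkowski_functional D z - d"
      using assms unfolding d_def by (simp add: field_simps)
    ultimately show ?thesis by linarith
  qed
  ultimately show ?thesis
    unfolding eventually_nhds by blast
qed

lemma continuous_on_minkowski_functional: "continuous_on UNIV (minkowski_functional D)"
  unfolding continuous_on_def
proof
  fix z
  have "(minkowski_functional D \<longlongrightarrow> minkowski_functional D z) (nhds z)"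
    by (rule order_tendstoI[OF eventually_minkowski_functional_greater
          eventually_minkowski_functional_less])
  then show "(minkowski_functional D \<longlongrightarrow> minkowski_functional D z) (at z within UNIV)"
    by (rule tendsto_mono[OF at_within_le_nhds])
qed

end

lemma lctvs_quasi_convex_separation:
  fixes K :: "'y::{real_vector,topological_space} set"
  assumes lctvs: "locally_convex_tvs TYPE('y)"
    and "convex K" and "c \<in> K" and "y \<notin> closure K"
  obtains \<psi> where "continuous_on UNIV \<psi>" "quasi_convex \<psi>" "\<And>k. k \<in> K \<Longrightarrow> \<psi> k < 1" "1 \<le> \<psi> y"
proof -
  define U where "U = {w. (-1) *\<^sub>R w + y \<in> - closure K}"
  have "open U"
    unfolding U_def by (rule lctvs_open_affine_preimage[OF lctvs]) auto
  moreover have "0 \<in> U"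
    unfolding U_def using assms(4) by simp
  ultimately obtain W where W: "open W" "convex W" "0 \<in> W" "W \<subseteq> U"
    using lctvs unfolding locally_convex_tvs_def by blast
  define D where "D = {z. 1 *\<^sub>R z + c \<in> K + W}"
  have "open D"
    unfolding D_def by (rule lctvs_open_affine_preimage[OF lctvs lctvs_open_set_plus[OF lctvs W(1)]])
  moreover have "convex D"
  proof -
    have "D = (\<lambda>z. z - c) ` (K + W)" unfolding D_def by (auto simp: image_iff algebra_simps)
    then show ?thesis using convex_set_plus[OF assms(2) W(2)] by simp
  qed
  moreover have K_in_D: "k - c \<in> D" if "k \<in> K" for k
    unfolding D_def using set_plus_intro[OF that W(3)] by simp
  ultimately interpret lctvs_convex_open_nbhd D
    using lctvs K_in_D[OF assms(3)] by unfold_locales simp_all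
  have "y - c \<notin> D"
  proof
    assume "y - c \<in> D"
    then have "y \<in> K + W" unfolding D_def by simp
    then obtain k w where "y = k + w" "k \<in> K" "w \<in> W" by (rule set_plus_elim)
    moreover have "y - w \<notin> closure K"
      using W(4) \<open>w \<in> W\<close> unfolding U_def by auto
    ultimately show False using closure_subset by auto
  qed
  show ?thesis
  proof
    show "continuous_on UNIV (\<lambda>x. minkowski_functional D (x - c))"
      using continuous_on_compose2[OF continuous_on_minkowski_functional
          lctvs_continuous_on_affine[OF lctvs, of 1 "- c"]] by simp
    show "quasi_convex (\<lambda>x. minkowski_functional D (x - c))"
      by (rule quasi_convex_translate[OF quasi_convex_minkowski_functional])
    show "minkowski_functional D (k - c) < 1" if "k \<in> K" for k
      using minkowski_functional_less_one K_in_D that by blast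
    show "1 \<le> minkowski_functional D (y - c)"
      using minkowski_functional_ge_one \<open>y - c \<notin> D\<close> by blast
  qed
qed

lemma bdd_above_image_compact_closure:
  fixes g :: "'a::topological_space \<Rightarrow> real"
  assumes "compact (closure S)" "continuous_on (closure S) g" "T \<subseteq> closure S"
  shows "bdd_above (g ` T)"
  using assms by (meson bdd_above_mono bounded_imp_bdd_above compact_continuous_image
      compact_imp_bounded image_mono)

lemma compact_SUP_less:
  fixes g :: "'a::topological_space \<Rightarrow> real"
  assumes "compact S" "S \<noteq> {}" "continuous_on S g" "\<And>x. x \<in> S \<Longrightarrow> g x < a"
  shows "(SUP x\<in>S. g x) < a"
proof -
  obtain x where "x \<in> S" "\<And>y. y \<in> S \<Longrightarrow> g y \<le> g x"
    using continuous_attains_sup[OF assms(1-3)] by blast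
  then have "(SUP x\<in>S. g x) \<le> g x" using assms(2) by (intro cSUP_least) auto
  then show ?thesis using assms(4) \<open>x \<in> S\<close> by fastforce
qed

lemma SUP_eq_SUP_frontier_if_convex_hull_property:
  fixes f :: "'e::topological_space \<Rightarrow> 'y::{real_vector,topological_space}"
  assumes "\<Omega> \<noteq> {}" "frontier \<Omega> \<noteq> {}" "compact (closure \<Omega>)" "continuous_on (closure \<Omega>) f"
    and "continuous_on UNIV \<psi>" "quasi_convex \<psi>"
    and hull_property: "f ` \<Omega> \<subseteq> closure (convex hull (f ` frontier \<Omega>))"
  shows "(SUP x\<in>\<Omega>. \<psi> (f x)) = (SUP x\<in>frontier \<Omega>. \<psi> (f x))"
proof (rule antisym)
  have frontier_sub: "frontier \<Omega> \<subseteq> closure \<Omega>" by (auto simp: frontier_def)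
  have cont: "continuous_on (closure \<Omega>) (\<lambda>x. \<psi> (f x))"
    using continuous_on_compose2[OF assms(5,4)] by blast
  note bdd = bdd_above_image_compact_closure[OF assms(3) cont]
  define r where "r = (SUP x\<in>frontier \<Omega>. \<psi> (f x))"
  have "f ` frontier \<Omega> \<subseteq> {y. \<psi> y \<le> r}"
    unfolding r_def using cSUP_upper[OF _ bdd[OF frontier_sub]] by auto
  moreover have "closed {y. \<psi> y \<le> r}" "convex {y. \<psi> y \<le> r}"
    using closed_Collect_le[OF assms(5) continuous_on_const] assms(6)
    unfolding quasi_convex_def by auto
  ultimately have "closure (convex hull (f ` frontier \<Omega>)) \<subseteq> {y. \<psi> y \<le> r}"
    by (intro closure_minimal hull_minimal)
  then show "(SUP x\<in>\<Omega>. \<psi> (f x)) \<le> r"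
    using hull_property assms(1) by (intro cSUP_least) auto
  define M where "M = (SUP x\<in>\<Omega>. \<psi> (f x))"
  have "(\<lambda>x. \<psi> (f x)) ` \<Omega> \<subseteq> {..M}"
    unfolding M_def using cSUP_upper[OF _ bdd[OF closure_subset]] by auto
  then have "(\<lambda>x. \<psi> (f x)) ` closure \<Omega> \<subseteq> {..M}"
    by (rule image_closure_subset[OF cont closed_atMost])
  then show "r \<le> M"
    unfolding r_def using frontier_sub assms(2) by (intro cSUP_least) auto
qed

lemma compact_frontier_if_compact_closure:
  assumes "compact (closure S)"
  shows "compact (frontier S)"
proof -
  have "frontier S = closure S \<inter> frontier S" by (auto simp: frontier_def)
  then show ?thesis using compact_Int_closed[OF assms frontier_closed] by metis
qed

lemma convex_hull_property_if_SUP_eq_SUP_frontier: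
  fixes f :: "'e::topological_space \<Rightarrow> 'y::{real_vector,topological_space}"
  assumes lctvs: "locally_convex_tvs TYPE('y)"
    and "frontier \<Omega> \<noteq> {}" "compact (closure \<Omega>)" "continuous_on (closure \<Omega>) f"
    and SUP_eq: "\<And>\<psi>::'y \<Rightarrow> real. continuous_on UNIV \<psi> \<Longrightarrow> quasi_convex \<psi> \<Longrightarrow>
       (SUP x\<in>\<Omega>. \<psi> (f x)) = (SUP x\<in>frontier \<Omega>. \<psi> (f x))"
  shows "f ` \<Omega> \<subseteq> closure (convex hull (f ` frontier \<Omega>))"
proof (rule ccontr)
  assume "\<not> ?thesis"
  then obtain x\<^sub>0 where x\<^sub>0: "x\<^sub>0 \<in> \<Omega>" "f x\<^sub>0 \<notin> closure (convex hull (f ` frontier \<Omega>))" by auto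
  obtain b where "b \<in> frontier \<Omega>" using assms(2) by auto
  obtain \<psi> where \<psi>: "continuous_on UNIV \<psi>" "quasi_convex \<psi>"
      "\<And>k. k \<in> convex hull (f ` frontier \<Omega>) \<Longrightarrow> \<psi> k < 1" "1 \<le> \<psi> (f x\<^sub>0)"
    using lctvs_quasi_convex_separation[OF lctvs convex_convex_hull
          hull_inc[OF imageI[OF \<open>b \<in> frontier \<Omega>\<close>]] x\<^sub>0(2)] by blast
  have cont: "continuous_on (closure \<Omega>) (\<lambda>x. \<psi> (f x))"
    using continuous_on_compose2[OF \<psi>(1) assms(4)] by blast
  have "frontier \<Omega> \<subseteq> closure \<Omega>" by (auto simp: frontier_def)
  moreover have "\<psi> (f x) < 1" if "x \<in> frontier \<Omega>" for x
    by (intro \<psi>(3) hull_inc imageI that)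
  ultimately have "(SUP x\<in>frontier \<Omega>. \<psi> (f x)) < 1"
    using compact_frontier_if_compact_closure[OF assms(3)] assms(2) continuous_on_subset[OF cont]
    by (intro compact_SUP_less) auto
  moreover have "1 \<le> (SUP x\<in>\<Omega>. \<psi> (f x))"
    using bdd_above_image_compact_closure[OF assms(3) cont closure_subset] x\<^sub>0(1)
    by (intro order_trans[OF \<psi>(4)] cSUP_upper)
  ultimately show False using SUP_eq[OF \<psi>(1,2)] by simp
qed

theorem proposition2:
  fixes \<Omega> :: "'e::topological_space set"
    and f :: "'e \<Rightarrow> 'y::{real_vector,t2_space}"
  assumes "locally_convex_tvs TYPE('y)"
    and "open \<Omega>" and "\<Omega> \<noteq> {}" and "compact (closure \<Omega>)" and "frontier \<Omega> \<noteq> {}"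
    and "continuous_on (closure \<Omega>) f"
  shows "f ` \<Omega> \<subseteq> closure (convex hull (f ` frontier \<Omega>)) \<longleftrightarrow>
    (\<forall>\<psi>::'y \<Rightarrow> real. continuous_on UNIV \<psi> \<and> quasi_convex \<psi> \<longrightarrow>
       (SUP x\<in>\<Omega>. \<psi> (f x)) = (SUP x\<in>frontier \<Omega>. \<psi> (f x)))"
  using SUP_eq_SUP_frontier_if_convex_hull_property[OF assms(3,5,4,6)]
    convex_hull_property_if_SUP_eq_SUP_frontier[OF assms(1,5,4,6)]
  by blast

end
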